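(* For every real random variable $X$ (no moment assumptions), every $\mathsf{snr}>0$ and every $n=0,1,2,\dots$, $$\mathbb{E}\Big[\big|X-\mathbb{E}[X\mid \sqrt{\mathsf{snr}}X+N]\big|^n\Big]\le \Big(\frac{2}{\sqrt{\mathsf{snr}}}\Big)^n\sqrt{n!},$$ where $N\sim\mathcal N(0,1)$ is independent of $X$. *)

theory Defs
  imports "HOL-Probability.Probability"
begin

end

theory Submission imports Defs begin

(* Write c = sqrt snr and Y = c X + N.  Since Y/c is a function of Y, conditioning on Y
   leaves it unchanged, and X = Y/c - N/c gives, almost surely,
       X - E[X | Y] = V - E[V | Y],        V = -N/c.
   This step needs care because X has no moments: conditional expectations of
   non-integrable variables are handled by truncating Y/c on the sets {|Y/c| <= k}.
   The error of a conditional expectation is then controlled by convexity of |x|^n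
   and the conditional Jensen inequality:  E|V - E[V|F]|^n <= 2^n E|V|^n.
   Finally E|V|^n = E|N|^n / c^n, and the absolute moments of the standard normal
   are at most sqrt(n!), which reduces to two elementary factorial inequalities.
   The argument never uses the independence of X and N. *)

lemma convex_on_power_nonneg: "convex_on {0::real..} (\<lambda>x. x ^ n)"
  by (cases "even n") (use convex_power_even convex_on_subset convex_power_odd in blast)+

(* |x|^n is convex on the whole line: the norm is convex and x^n is monotone and
   convex on its (nonnegative) values.  This is the convex function fed to Jensen. *)
lemma convex_on_abs_power: "convex_on (UNIV::real set) (\<lambda>x. \<bar>x\<bar> ^ n)"
proof (rule convex_onI)
  fix t x y :: real assume t: "0 < t" "t < 1"
  have "\<bar>(1 - t) *\<^sub>R x + t *\<^sub>R y\<bar> ^ n \<le> ((1 - t) *\<^sub>R \<bar>x\<bar> + t *\<^sub>R \<bar>y\<bar>) ^ n"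
    by (rule power_mono) (use t in \<open>auto intro: order_trans[OF abs_triangle_ineq] simp: abs_mult\<close>)
  also have "\<dots> \<le> (1 - t) * \<bar>x\<bar> ^ n + t * \<bar>y\<bar> ^ n"
    using convex_onD[OF convex_on_power_nonneg, of t "\<bar>x\<bar>" "\<bar>y\<bar>" n] t by auto
  finally show "\<bar>(1 - t) *\<^sub>R x + t *\<^sub>R y\<bar> ^ n \<le> (1 - t) * \<bar>x\<bar> ^ n + t * \<bar>y\<bar> ^ n" .
qed auto

(* Midpoint convexity of |x|^n, rescaled: |a - b|^n <= 2^(n-1) (|a|^n + |b|^n). *)
lemma abs_diff_power_le:
  fixes a b :: real
  shows "2 * \<bar>a - b\<bar> ^ n \<le> 2 ^ n * (\<bar>a\<bar> ^ n + \<bar>b\<bar> ^ n)"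
proof -
  have "(1 - 1/2) *\<^sub>R a + (1/2) *\<^sub>R (- b) = (a - b) / 2"
    by simp
  then have "\<bar>a - b\<bar> ^ n = 2 ^ n * \<bar>(1 - 1/2) *\<^sub>R a + (1/2) *\<^sub>R (- b)\<bar> ^ n"
    by (simp only: abs_divide power_divide) simp
  also have "\<dots> \<le> 2 ^ n * ((1 - 1/2) * \<bar>a\<bar> ^ n + (1/2) * \<bar>- b\<bar> ^ n)"
    by (intro mult_left_mono convex_onD[OF convex_on_abs_power]) auto
  finally show ?thesis by (simp add: algebra_simps)
qed

(* (2k)! <= 4^k (k!)^2: the central binomial coefficient is at most 4^k. *)
lemma fact_double_le: "fact (2 * k) \<le> (4::nat) ^ k * (fact k)\<^sup>2"
proof (induction k)
  case (Suc k)
  have "fact (2 * Suc k) = (2*k+2) * (2*k+1) * (fact (2 * k) :: nat)"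
    by (simp add: algebra_simps)
  also have "\<dots> \<le> (2*k+2) * (2*k+1) * (4 ^ k * (fact k)\<^sup>2)"
    using Suc by (intro mult_left_mono) auto
  also have "\<dots> \<le> (4 * (k+1)\<^sup>2) * (4 ^ k * (fact k)\<^sup>2)"
    by (intro mult_right_mono) (auto simp: power2_eq_square algebra_simps)
  also have "\<dots> = 4 ^ Suc k * (fact (Suc k))\<^sup>2"
    by (simp add: power2_eq_square algebra_simps)
  finally show ?case .
qed simp

(* 4^k (k!)^2 <= (2k+1)!, the companion bound needed for odd moments. *)
lemma fact_double_Suc_ge: "(4::nat) ^ k * (fact k)\<^sup>2 \<le> fact (2 * k + 1)"
proof (induction k)
  case (Suc k)
  have "(4::nat) ^ Suc k * (fact (Suc k))\<^sup>2 = (4 * (k+1)\<^sup>2) * (4 ^ k * (fact k)\<^sup>2)"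
    by (simp add: power2_eq_square algebra_simps)
  also have "\<dots> \<le> (2*k+3) * (2*k+2) * (4 ^ k * (fact k)\<^sup>2)"
    by (intro mult_right_mono) (auto simp: power2_eq_square algebra_simps)
  also have "\<dots> \<le> (2*k+3) * (2*k+2) * fact (2 * k + 1)"
    using Suc by simp
  also have "\<dots> = fact (2 * Suc k + 1)"
    by (simp add: algebra_simps)
  finally show ?case .
qed simp

(* Rewriting 4^k as (2^k)^2 lets the simplifier cancel against powers of 2. *)
lemma four_power_eq: "(4::real) ^ k = 2 ^ k * 2 ^ k"
  by (simp flip: power_mult_distrib)

(* E|G|^n <= sqrt(n!) for a standard normal G.  The exact values are
   (2k)!/(2^k k!) for n = 2k and sqrt(2/pi) 2^k k! for n = 2k+1. *)
lemma std_normal_abs_moment_le: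
  "(\<integral>x. std_normal_density x * \<bar>x\<bar> ^ n \<partial>lborel) \<le> sqrt (fact n)"
proof (cases "even n")
  case True
  then obtain k where n: "n = 2 * k" by auto
  have "real (fact (2 * k)) \<le> real (4 ^ k * (fact k)\<^sup>2)"
    using fact_double_le[of k] by linarith
  then have A: "(fact (2 * k) :: real) \<le> 4 ^ k * (fact k)\<^sup>2"
    by (simp add: of_nat_fact)
  have "(fact (2 * k) / (2 ^ k * fact k))\<^sup>2 = fact (2 * k) * (fact (2 * k) / (4 ^ k * (fact k)\<^sup>2) :: real)"
    by (simp add: four_power_eq power2_eq_square)
  also have "\<dots> \<le> fact (2 * k) * 1"
    using A by (intro mult_left_mono) auto
  finally have "fact (2 * k) / (2 ^ k * fact k) \<le> sqrt (fact n)"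
    using n real_le_rsqrt by simp
  then show ?thesis
    using integral_std_normal_moment_even[of k] n by (simp add: power_even_abs)
next
  case False
  then obtain k where n: "n = 2 * k + 1" using oddE by blast
  have "real (4 ^ k * (fact k)\<^sup>2) \<le> real (fact (2 * k + 1))"
    using fact_double_Suc_ge[of k] by linarith
  then have A: "4 ^ k * (fact k)\<^sup>2 \<le> (fact (2 * k + 1) :: real)"
    by (simp add: of_nat_fact algebra_simps)
  have "(sqrt (2 / pi) * 2 ^ k * fact k)\<^sup>2 = (2 / pi) * (4 ^ k * (fact k)\<^sup>2)"
    by (simp add: four_power_eq power_mult_distrib power2_eq_square[of "2 ^ k :: real"])
  also have "\<dots> \<le> 1 * (4 ^ k * (fact k)\<^sup>2)"
    using pi_gt3 by (intro mult_right_mono) auto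
  finally have "sqrt (2 / pi) * 2 ^ k * fact k \<le> sqrt (fact n)"
    using A n real_le_rsqrt by simp
  then show ?thesis
    using integral_std_normal_moment_abs_odd[of k] n by simp
qed

lemma std_normal_rv_abs_moment:
  assumes N: "distributed M lborel N std_normal_density"
  shows "integrable M (\<lambda>\<omega>. \<bar>N \<omega>\<bar> ^ n)" and "(\<integral>\<omega>. \<bar>N \<omega>\<bar> ^ n \<partial>M) \<le> sqrt (fact n)"
proof -
  show "integrable M (\<lambda>\<omega>. \<bar>N \<omega>\<bar> ^ n)"
    using distributed_integrable[OF N, of "\<lambda>x. \<bar>x\<bar> ^ n"] integrable_std_normal_moment_abs[of n]
    by simp
  have "(\<integral>\<omega>. \<bar>N \<omega>\<bar> ^ n \<partial>M) = (\<integral>x. std_normal_density x * \<bar>x\<bar> ^ n \<partial>lborel)"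
    using distributed_integral[OF N, of "\<lambda>x. \<bar>x\<bar> ^ n"] by simp
  then show "(\<integral>\<omega>. \<bar>N \<omega>\<bar> ^ n \<partial>M) \<le> sqrt (fact n)"
    using std_normal_abs_moment_le by simp
qed

lemma (in finite_measure) sigma_finite_subalgebra_vimage:
  assumes "Y \<in> measurable M N"
  shows "sigma_finite_subalgebra M (vimage_algebra (space M) Y N)"
proof -
  have "subalgebra M (vimage_algebra (space M) Y N)"
    unfolding subalgebra_def using sets_image_in_sets[OF refl assms] by simp
  then show ?thesis
    by (intro finite_measure_subalgebra_is_sigma_finite)
       (simp add: finite_measure_subalgebra_def finite_measure_subalgebra_axioms_def finite_measure_axioms)
qed

context sigma_finite_subalgebra
begin

(* Pulling out an F-measurable indicator, with no integrability assumption on Z;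
   it is read off from the corresponding fact for the nonnegative parts. *)
lemma real_cond_exp_indicator_mult:
  fixes Z :: "'a \<Rightarrow> real"
  assumes [measurable]: "Z \<in> borel_measurable M" and A[measurable]: "A \<in> sets F"
  shows "AE x in M. real_cond_exp M F (\<lambda>x. indicator A x * Z x) x = indicator A x * real_cond_exp M F Z x"
proof -
  have [measurable]: "(indicator A :: 'a \<Rightarrow> ennreal) \<in> borel_measurable F" by measurable
  have pos: "(\<lambda>x. ennreal (indicator A x * Z x)) = (\<lambda>x. indicator A x * ennreal (Z x))"
    and neg: "(\<lambda>x. ennreal (- (indicator A x * Z x))) = (\<lambda>x. indicator A x * ennreal (- Z x))"
    by (auto simp: indicator_def)
  have "AE x in M. indicator A x * nn_cond_exp M F (\<lambda>x. ennreal (Z x)) x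
      = nn_cond_exp M F (\<lambda>x. indicator A x * ennreal (Z x)) x"
   and "AE x in M. indicator A x * nn_cond_exp M F (\<lambda>x. ennreal (- Z x)) x
      = nn_cond_exp M F (\<lambda>x. indicator A x * ennreal (- Z x)) x"
    by (rule nn_cond_exp_prod; simp)+
  then show ?thesis
    unfolding real_cond_exp_def pos neg
    by eventually_elim (auto simp: indicator_def)
qed

(* On each truncation set {|W| <= k}, which lies in F, both
   summands are integrable and the usual linearity applies. *)
lemma real_cond_exp_add_F_meas:
  fixes Z W V :: "'a \<Rightarrow> real"
  assumes fin: "finite_measure M"
    and [measurable]: "Z \<in> borel_measurable M" "W \<in> borel_measurable F"
    and V: "integrable M V"
    and ZWV: "\<And>x. x \<in> space M \<Longrightarrow> Z x = W x + V x"
  shows "AE x in M. real_cond_exp M F Z x = W x + real_cond_exp M F V x"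
proof -
  have [measurable]: "W \<in> borel_measurable M"
    using measurable_from_subalg[OF subalg] assms(3) by blast
  have [measurable]: "V \<in> borel_measurable M"
    using V by auto
  define A where "A k = {x \<in> space M. \<bar>W x\<bar> \<le> real k}" for k :: nat
  have A_F[measurable]: "A k \<in> sets F" for k
  proof -
    have "{x \<in> space F. \<bar>W x\<bar> \<le> real k} \<in> sets F" by measurable
    moreover have "space F = space M" using subalg by (simp add: subalgebra_def)
    ultimately show ?thesis by (simp add: A_def)
  qed
  have A_M[measurable]: "A k \<in> sets M" for k
    using A_F subalg by (auto simp: subalgebra_def)
  have truncated: "AE x in M. indicator (A k) x * real_cond_exp M F Z x
      = indicator (A k) x * W x + indicator (A k) x * real_cond_exp M F V x" for k
  proof -
    have iW: "integrable M (\<lambda>x. indicator (A k) x * W x)"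
      by (rule finite_measure.integrable_const_bound[OF fin, where B="real k"])
         (auto simp: indicator_def A_def)
    have iV: "integrable M (\<lambda>x. indicator (A k) x * V x)"
      using integrable_real_mult_indicator[OF A_M V] by (simp add: mult.commute)
    have "AE x in M. real_cond_exp M F (\<lambda>x. indicator (A k) x * Z x) x = indicator (A k) x * real_cond_exp M F Z x"
      by (rule real_cond_exp_indicator_mult) auto
    moreover have "AE x in M. real_cond_exp M F (\<lambda>x. indicator (A k) x * Z x) x
        = real_cond_exp M F (\<lambda>x. indicator (A k) x * W x + indicator (A k) x * V x) x"
      by (rule real_cond_exp_cong) (auto simp: ZWV algebra_simps)
    moreover have "AE x in M. real_cond_exp M F (\<lambda>x. indicator (A k) x * W x + indicator (A k) x * V x) x
        = real_cond_exp M F (\<lambda>x. indicator (A k) x * W x) x + real_cond_exp M F (\<lambda>x. indicator (A k) x * V x) x"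
      by (rule real_cond_exp_add[OF iW iV])
    moreover have "AE x in M. real_cond_exp M F (\<lambda>x. indicator (A k) x * W x) x = indicator (A k) x * W x"
      by (rule real_cond_exp_F_meas[OF iW]) measurable
    moreover have "AE x in M. real_cond_exp M F (\<lambda>x. indicator (A k) x * V x) x = indicator (A k) x * real_cond_exp M F V x"
      by (rule real_cond_exp_indicator_mult) auto
    ultimately show ?thesis by eventually_elim simp
  qed
  have "AE x in M. \<forall>k. indicator (A k) x * real_cond_exp M F Z x
      = indicator (A k) x * W x + indicator (A k) x * real_cond_exp M F V x"
    using truncated by (simp add: AE_all_countable)
  then show ?thesis using AE_space
  proof eventually_elim
    case (elim x)
    obtain k :: nat where "\<bar>W x\<bar> \<le> real k" using real_arch_simple by blast
    then have "x \<in> A k" using elim(2) by (simp add: A_def)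
    then show ?case using elim(1)[rule_format, of k] by simp
  qed
qed

lemma real_cond_exp_abs_power_integral_le:
  assumes V: "integrable M V" and Vn: "integrable M (\<lambda>x. \<bar>V x\<bar> ^ n)"
  shows "integrable M (\<lambda>x. \<bar>real_cond_exp M F V x\<bar> ^ n)"
    and "(\<integral>x. \<bar>real_cond_exp M F V x\<bar> ^ n \<partial>M) \<le> (\<integral>x. \<bar>V x\<bar> ^ n \<partial>M)"
proof -
  show int: "integrable M (\<lambda>x. \<bar>real_cond_exp M F V x\<bar> ^ n)"
    using integrable_convex_cond_exp[of V UNIV, OF V _ _ Vn convex_on_abs_power] by auto
  have "AE x in M. \<bar>real_cond_exp M F V x\<bar> ^ n \<le> real_cond_exp M F (\<lambda>x. \<bar>V x\<bar> ^ n) x"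
    using real_cond_exp_jensens_inequality(2)[of V UNIV, OF V _ _ Vn convex_on_abs_power] by auto
  then have "(\<integral>x. \<bar>real_cond_exp M F V x\<bar> ^ n \<partial>M) \<le> (\<integral>x. real_cond_exp M F (\<lambda>x. \<bar>V x\<bar> ^ n) x \<partial>M)"
    using real_cond_exp_int(1)[OF Vn] by (intro integral_mono_AE[OF int])
  also have "\<dots> = (\<integral>x. \<bar>V x\<bar> ^ n \<partial>M)"
    by (rule real_cond_exp_int(2)[OF Vn])
  finally show "(\<integral>x. \<bar>real_cond_exp M F V x\<bar> ^ n \<partial>M) \<le> (\<integral>x. \<bar>V x\<bar> ^ n \<partial>M)" .
qed

lemma real_cond_exp_error_moment_le:
  assumes V: "integrable M V" and Vn: "integrable M (\<lambda>x. \<bar>V x\<bar> ^ n)"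
  shows "(\<integral>\<^sup>+x. ennreal (\<bar>V x - real_cond_exp M F V x\<bar> ^ n) \<partial>M) \<le> ennreal (2 ^ n * (\<integral>x. \<bar>V x\<bar> ^ n \<partial>M))"
proof -
  note C = real_cond_exp_abs_power_integral_le[OF V Vn]
  define B where "B x = 2 ^ n / 2 * (\<bar>V x\<bar> ^ n + \<bar>real_cond_exp M F V x\<bar> ^ n)" for x
  have int_B: "integrable M B" unfolding B_def using Vn C(1) by auto
  have err_le_B: "\<bar>V x - real_cond_exp M F V x\<bar> ^ n \<le> B x" for x
    using abs_diff_power_le[of "V x" "real_cond_exp M F V x" n] by (simp add: B_def)
  have int_err: "integrable M (\<lambda>x. \<bar>V x - real_cond_exp M F V x\<bar> ^ n)"
  proof (rule Bochner_Integration.integrable_bound[OF int_B])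
    show "AE x in M. norm (\<bar>V x - real_cond_exp M F V x\<bar> ^ n) \<le> norm (B x)"
      using err_le_B by (intro AE_I2) (simp add: B_def)
  qed (use V in measurable)
  have "(\<integral>x. \<bar>V x - real_cond_exp M F V x\<bar> ^ n \<partial>M) \<le> (\<integral>x. B x \<partial>M)"
    by (rule integral_mono[OF int_err int_B err_le_B])
  also have "\<dots> = 2 ^ n / 2 * ((\<integral>x. \<bar>V x\<bar> ^ n \<partial>M) + (\<integral>x. \<bar>real_cond_exp M F V x\<bar> ^ n \<partial>M))"
    unfolding B_def using Vn C(1) by simp
  also have "\<dots> \<le> 2 ^ n * (\<integral>x. \<bar>V x\<bar> ^ n \<partial>M)"
    using C(2) by simp
  finally show ?thesis
    by (simp add: nn_integral_eq_integral[OF int_err] ennreal_leI)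
qed

end

theorem proposition5:
  fixes M :: "'a measure" and X N :: "'a \<Rightarrow> real" and snr :: real and n :: nat
  assumes "prob_space M"
    and "X \<in> borel_measurable M"
    and "distributed M lborel N std_normal_density"
    and "prob_space.indep_var M borel X borel N"
    and "snr > 0"
  shows "(\<integral>\<^sup>+ \<omega>. ennreal (\<bar>X \<omega> - real_cond_exp M
              (vimage_algebra (space M) (\<lambda>\<omega>. sqrt snr * X \<omega> + N \<omega>) borel) X \<omega>\<bar> ^ n) \<partial>M)
         \<le> ennreal ((2 / sqrt snr) ^ n * sqrt (fact n))"
proof -
  interpret prob_space M by fact
  define c where "c = sqrt snr"
  have c: "c > 0" using assms(5) by (simp add: c_def)
  note N = assms(3)
  have [measurable]: "X \<in> borel_measurable M" "N \<in> borel_measurable M"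
    using assms(2) distributed_measurable[OF N] by simp_all
  define Y where "Y \<omega> = c * X \<omega> + N \<omega>" for \<omega>
  define F where "F = vimage_algebra (space M) Y borel"
  have Y_M[measurable]: "Y \<in> borel_measurable M" unfolding Y_def by measurable
  interpret S: sigma_finite_subalgebra M F
    unfolding F_def by (rule sigma_finite_subalgebra_vimage[OF Y_M])
  have Y_F: "(\<lambda>\<omega>. Y \<omega> / c) \<in> borel_measurable F"
    unfolding F_def by (intro borel_measurable_divide measurable_vimage_algebra1) simp_all
  define V where "V \<omega> = - N \<omega> / c" for \<omega>
  have V: "integrable M V"
    unfolding V_def using distributed_integrable_var[OF N] integrable_normal_moment_nz_1 by auto
  have V_moment: "(\<integral>\<omega>. \<bar>V \<omega>\<bar> ^ n \<partial>M) = (\<integral>\<omega>. \<bar>N \<omega>\<bar> ^ n \<partial>M) / c ^ n"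
   and Vn: "integrable M (\<lambda>\<omega>. \<bar>V \<omega>\<bar> ^ n)"
    using std_normal_rv_abs_moment(1)[OF N] c by (simp_all add: V_def power_divide)
  have X_eq: "X \<omega> = Y \<omega> / c + V \<omega>" for \<omega>
    using c by (simp add: Y_def V_def field_simps)
  \<comment> \<open>the error of estimating X from Y coincides with that of estimating the scaled noise\<close>
  have "AE \<omega> in M. real_cond_exp M F X \<omega> = Y \<omega> / c + real_cond_exp M F V \<omega>"
    by (rule S.real_cond_exp_add_F_meas[OF finite_measure_axioms _ Y_F V X_eq]) simp
  then have "(\<integral>\<^sup>+ \<omega>. ennreal (\<bar>X \<omega> - real_cond_exp M F X \<omega>\<bar> ^ n) \<partial>M)
      = (\<integral>\<^sup>+ \<omega>. ennreal (\<bar>V \<omega> - real_cond_exp M F V \<omega>\<bar> ^ n) \<partial>M)"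
    by (intro nn_integral_cong_AE) (auto simp: X_eq)
  also have "\<dots> \<le> ennreal (2 ^ n * ((\<integral>\<omega>. \<bar>N \<omega>\<bar> ^ n \<partial>M) / c ^ n))"
    using S.real_cond_exp_error_moment_le[OF V Vn] by (simp add: V_moment)
  also have "\<dots> \<le> ennreal ((2 / c) ^ n * sqrt (fact n))"
    using std_normal_rv_abs_moment(2)[OF N, of n] c
    by (intro ennreal_leI) (simp add: power_divide divide_right_mono mult_left_mono field_simps)
  finally show ?thesis unfolding F_def Y_def c_def .
qed

end
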